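(* Let $X$ be a finite multiset of nonzero real numbers and let $T_{\min}$ be an addition tree over $X$ of minimum cost. Let $z$ be an internal node of $T_{\min}$ that is not the root, with children $z_1$ and $z_2$, sibling $u$, and parent $r$ (identifying each node with its value). (1) If $z>0$, $z_1\ge 0$ and $z_2>0$, then $u\ge 0$ or $r<0$. (2) If $z<0$, $z_1\le 0$ and $z_2<0$, then $u\le 0$ or $r>0$.
   Context: An addition tree over a multiset $X=\{x_1,\dots,x_n\}$ is a full binary tree with $n$ leaves labeled by the elements of $X$ (each element used exactly once), where every internal node has as its value the sum of the values of its two children. If $I_1,\dots,I_{n-1}$ are the values of the internal nodes of $T$, the cost of $T$ is $C(T)=\sum_{i=1}^{n-1}|I_i|$. $T_{\min}$ denotes an addition tree over $X$ minimizing $C$. *)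

theory Defs
  imports Complex_Main "HOL-Library.Multiset"
begin

datatype atree = Leaf real | Node atree atree

fun val :: "atree \<Rightarrow> real" where
  "val (Leaf x) = x"
| "val (Node l r) = val l + val r"

fun leaves :: "atree \<Rightarrow> real multiset" where
  "leaves (Leaf x) = {#x#}"
| "leaves (Node l r) = leaves l + leaves r"

fun cost :: "atree \<Rightarrow> real" where
  "cost (Leaf x) = 0"
| "cost (Node l r) = \<bar>val l + val r\<bar> + cost l + cost r"

fun subtrees :: "atree \<Rightarrow> atree set" where
  "subtrees (Leaf x) = {Leaf x}"
| "subtrees (Node l r) = insert (Node l r) (subtrees l \<union> subtrees r)"

definition addition_tree :: "real multiset \<Rightarrow> atree \<Rightarrow> bool" where
  "addition_tree X T \<longleftrightarrow> leaves T = X"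

definition min_addition_tree :: "real multiset \<Rightarrow> atree \<Rightarrow> bool" where
  "min_addition_tree X T \<longleftrightarrow> addition_tree X T \<and>
     (\<forall>T'. addition_tree X T' \<longrightarrow> cost T \<le> cost T')"

end

theory Submission
  imports Defs
begin

text \<open>If \<open>u\<close> had the opposite sign to \<open>z\<close> without reversing the sign of the parent
  \<open>r = z\<^sub>1 + z\<^sub>2 + u\<close>, rotating the parent into \<open>(z\<^sub>2 + u) + z\<^sub>1\<close> would keep the leaves and every
  other internal node but replace \<open>|z\<^sub>1 + z\<^sub>2|\<close> by the strictly smaller \<open>|z\<^sub>2 + u|\<close>.
  Since the cost of a tree is additive over subtrees, this contradicts minimality.\<close>

lemma val_eq_sum_mset_leaves: "val T = sum_mset (leaves T)"
  by (induction T) simp_all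

lemma cheaper_subtree_gives_cheaper_tree:
  assumes "S \<in> subtrees T" "leaves S' = leaves S" "cost S' < cost S"
  shows "\<exists>T'. leaves T' = leaves T \<and> cost T' < cost T"
  using assms(1)
proof (induction T)
  case (Leaf x)
  then show ?case using assms(2,3) by auto
next
  case (Node l r)
  consider "S = Node l r" | "S \<in> subtrees l" | "S \<in> subtrees r"
    using Node.prems by auto
  then show ?case
  proof cases
    case 1
    then show ?thesis using assms(2,3) by blast
  next
    case 2
    then obtain l' where "leaves l' = leaves l" "cost l' < cost l"
      using Node.IH(1) by blast
    then show ?thesis
      by (intro exI[of _ "Node l' r"]) (simp add: val_eq_sum_mset_leaves)
  next
    case 3
    then obtain r' where "leaves r' = leaves r" "cost r' < cost r"
      using Node.IH(2) by blast
    then show ?thesis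
      by (intro exI[of _ "Node l r'"]) (simp add: val_eq_sum_mset_leaves)
  qed
qed

lemma min_addition_tree_subtree_cost_le:
  assumes "min_addition_tree X T" "S \<in> subtrees T" "leaves S' = leaves S"
  shows "cost S \<le> cost S'"
proof (rule ccontr)
  assume "\<not> cost S \<le> cost S'"
  then obtain T' where "leaves T' = leaves T" "cost T' < cost T"
    using cheaper_subtree_gives_cheaper_tree[OF assms(2,3)] by auto
  then show False
    using assms(1) unfolding min_addition_tree_def addition_tree_def by force
qed

lemma abs_rotated_sum_less:
  fixes a b c :: real
  assumes "0 \<le> a" "0 < b" "c < 0" "0 \<le> a + b + c"
  shows "\<bar>b + c\<bar> < \<bar>a + b\<bar>"
  using assms by linarith

theorem lemma2p1:
  fixes X :: "real multiset" and T z z1 z2 u :: atree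
  assumes nonzero: "\<forall>x\<in>#X. x \<noteq> 0"
    and min: "min_addition_tree X T"
    and children: "z = Node z1 z2 \<or> z = Node z2 z1"
    and parent: "Node z u \<in> subtrees T \<or> Node u z \<in> subtrees T"
  shows "(val z > 0 \<and> val z1 \<ge> 0 \<and> val z2 > 0 \<longrightarrow>
            val u \<ge> 0 \<or> val z + val u < 0)
       \<and> (val z < 0 \<and> val z1 \<le> 0 \<and> val z2 < 0 \<longrightarrow>
            val u \<le> 0 \<or> val z + val u > 0)"
proof -
  obtain S where S: "S \<in> subtrees T" "S = Node z u \<or> S = Node u z"
    using parent by blast
  have "leaves (Node (Node z2 u) z1) = leaves S"
    using S(2) children by auto
  then have "cost S \<le> cost (Node (Node z2 u) z1)"
    using min_addition_tree_subtree_cost_le[OF min S(1)] by blast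
  then have rotation_no_gain: "\<bar>val z1 + val z2\<bar> \<le> \<bar>val z2 + val u\<bar>"
    using S(2) children by (auto simp: algebra_simps)
  have val_z: "val z = val z1 + val z2"
    using children by auto
  show ?thesis
    using rotation_no_gain val_z
      abs_rotated_sum_less[of "val z1" "val z2" "val u"]
      abs_rotated_sum_less[of "- val z1" "- val z2" "- val u"]
    by auto
qed

end
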